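(* Let $Y$ be a set and let $d$ be a derivation of $R\mathfrak L[Y]$ (strictly raising the degree). Then for every $y\in Y$, \[d(y)\in\langle y\rangle+\bigcap_{y'\in Y,\ y'\neq y}\langle y'\rangle=:J_y,\] where $\langle z\rangle$ denotes the Lie ideal of $R\mathfrak L[Y]$ generated by $z$. Conversely, any map $Y\to R\mathfrak L[Y]_{\geq2}$ sending each $y$ into $J_y$ extends uniquely to a derivation of $R\mathfrak L[Y]$.
   Context: $R\mathfrak L[Y]$ is the Lie ring generated by $Y$ subject to $[y_1,[y_2,[\cdots[y_{s-1},y_s]\cdots]]]=0$ for every $s\geq2$ and every $(y_1,\dots,y_s)\in Y^s$ with $y_i=y_j$ for some $i\neq j$; it is graded by bracket length and $R\mathfrak L[Y]_{\geq2}$ is the part of degree at least $2$. Standing convention: derivations of $R\mathfrak L[Y]$ considered are those strictly raising the degree, i.e. sending $Y$ into $R\mathfrak L[Y]_{\geq2}$. *)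

theory Defs
  imports Main
begin

datatype 'y lexpr = Gen 'y | Zero | Add "'y lexpr" "'y lexpr" | Neg "'y lexpr"
  | Br "'y lexpr" "'y lexpr"

fun rnorm :: "'y list \<Rightarrow> 'y lexpr" where
  "rnorm [] = Zero"
| "rnorm [y] = Gen y"
| "rnorm (y # ys) = Br (Gen y) (rnorm ys)"

inductive rl_eq :: "'y lexpr \<Rightarrow> 'y lexpr \<Rightarrow> bool" where
  refl: "rl_eq a a"
| sym: "rl_eq a b \<Longrightarrow> rl_eq b a"
| trans: "rl_eq a b \<Longrightarrow> rl_eq b c \<Longrightarrow> rl_eq a c"
| cong_add: "rl_eq a b \<Longrightarrow> rl_eq c d \<Longrightarrow> rl_eq (Add a c) (Add b d)"
| cong_neg: "rl_eq a b \<Longrightarrow> rl_eq (Neg a) (Neg b)"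
| cong_br: "rl_eq a b \<Longrightarrow> rl_eq c d \<Longrightarrow> rl_eq (Br a c) (Br b d)"
| add_assoc: "rl_eq (Add (Add a b) c) (Add a (Add b c))"
| add_comm: "rl_eq (Add a b) (Add b a)"
| add_zero: "rl_eq (Add a Zero) a"
| add_neg: "rl_eq (Add a (Neg a)) Zero"
| br_add_left: "rl_eq (Br (Add a b) c) (Add (Br a c) (Br b c))"
| br_add_right: "rl_eq (Br a (Add b c)) (Add (Br a b) (Br a c))"
| br_alt: "rl_eq (Br a a) Zero"
| jacobi: "rl_eq (Add (Br a (Br b c)) (Add (Br b (Br c a)) (Br c (Br a b)))) Zero"
| rel: "2 \<le> length ys \<Longrightarrow> \<not> distinct ys \<Longrightarrow> rl_eq (rnorm ys) Zero"

lemma rl_eq_equivp: "equivp rl_eq"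
  by (rule equivpI; auto intro: reflpI sympI transpI rl_eq.intros)

quotient_type 'y RL = "'y lexpr" / rl_eq
  by (rule rl_eq_equivp)

instantiation RL :: (type) "{zero, plus, uminus, minus}"
begin
lift_definition zero_RL :: "'a RL" is Zero .
lift_definition plus_RL :: "'a RL \<Rightarrow> 'a RL \<Rightarrow> 'a RL" is Add
  by (rule rl_eq.cong_add)
lift_definition uminus_RL :: "'a RL \<Rightarrow> 'a RL" is Neg
  by (rule rl_eq.cong_neg)
lift_definition minus_RL :: "'a RL \<Rightarrow> 'a RL \<Rightarrow> 'a RL" is "\<lambda>a b. Add a (Neg b)"
  by (intro rl_eq.cong_add rl_eq.cong_neg)
instance ..
end

lift_definition rl_br :: "'y RL \<Rightarrow> 'y RL \<Rightarrow> 'y RL" is Br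
  by (rule rl_eq.cong_br)

lift_definition rl_gen :: "'y \<Rightarrow> 'y RL" is Gen .

inductive hom_deg :: "'y lexpr \<Rightarrow> nat \<Rightarrow> bool" where
  "hom_deg (Gen y) 1"
| "hom_deg Zero n"
| "hom_deg a n \<Longrightarrow> hom_deg b n \<Longrightarrow> hom_deg (Add a b) n"
| "hom_deg a n \<Longrightarrow> hom_deg (Neg a) n"
| "hom_deg a m \<Longrightarrow> hom_deg b n \<Longrightarrow> hom_deg (Br a b) (m + n)"

definition rl_deg :: "nat \<Rightarrow> 'y RL set" where
  "rl_deg n = abs_RL ` {e. hom_deg e n}"

inductive_set rl_geq2 :: "'y RL set" where
  "n \<ge> 2 \<Longrightarrow> x \<in> rl_deg n \<Longrightarrow> x \<in> rl_geq2"
| "x \<in> rl_geq2 \<Longrightarrow> z \<in> rl_geq2 \<Longrightarrow> x + z \<in> rl_geq2"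

inductive_set rl_ideal :: "'y RL \<Rightarrow> 'y RL set" for z where
  gen: "z \<in> rl_ideal z"
| zero: "0 \<in> rl_ideal z"
| add: "a \<in> rl_ideal z \<Longrightarrow> b \<in> rl_ideal z \<Longrightarrow> a + b \<in> rl_ideal z"
| neg: "a \<in> rl_ideal z \<Longrightarrow> - a \<in> rl_ideal z"
| br_l: "a \<in> rl_ideal z \<Longrightarrow> rl_br x a \<in> rl_ideal z"
| br_r: "a \<in> rl_ideal z \<Longrightarrow> rl_br a x \<in> rl_ideal z"

definition J :: "'y \<Rightarrow> 'y RL set" where
  "J y = {a + b | a b. a \<in> rl_ideal (rl_gen y) \<and>
                      b \<in> (\<Inter>y'\<in>{y'. y' \<noteq> y}. rl_ideal (rl_gen y'))}"

text \<open>Derivations of RL[Y] (additive, Leibniz), strictly raising the degree,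
  i.e. sending Y into RL[Y]_{>=2} (standing convention).\<close>
definition rl_derivation :: "('y RL \<Rightarrow> 'y RL) \<Rightarrow> bool" where
  "rl_derivation d \<longleftrightarrow>
     (\<forall>a b. d (a + b) = d a + d b) \<and>
     (\<forall>a b. d (rl_br a b) = rl_br (d a) b + rl_br a (d b)) \<and>
     (\<forall>y. d (rl_gen y) \<in> rl_geq2)"

end

theory Submission
  imports Defs "HOL-Computational_Algebra.Group_Closure" "HOL-Library.Multiset"
begin

text \<open>The ideal generated by a generator z is spanned by the right-normed words ending in z, and it
  is abelian because [z, [..., z]] = 0. This gives existence: the Leibniz extension of f respects a
  relation [y1, [..., ys]] with a repeated letter, since each of its terms has two slots in one
  abelian ideal once f z is split along J z. For the converse, split d y as u + m + w with
  u in the ideal of y, m in the ideal of y' and w free of y and y' (by killing generators);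
  applying d to [y, [y, y']] = 0 leaves [w, [y, y']] + [y, [w, y']] = 0. Reading off coordinates in
  the basis of canonical right-normed words, realised by an action of RL[Y] on functions of words,
  shows that w = 0, i.e. the part of d y outside the ideal of y lies in the ideal of y'.\<close>

section \<open>RL[Y] as a Lie ring\<close>

instance RL :: (type) ab_group_add
proof
  fix a b c :: "'a RL"
  show "a + b + c = a + (b + c)" by transfer (rule rl_eq.add_assoc)
  show "a + b = b + a" by transfer (rule rl_eq.add_comm)
  show "0 + a = a" by transfer (meson rl_eq.add_comm rl_eq.add_zero rl_eq.trans)
  show "- a + a = 0" by transfer (meson rl_eq.add_comm rl_eq.add_neg rl_eq.trans)
  show "a - b = a + - b" by transfer (rule rl_eq.refl)
qed

lemma rl_br_add_left: "rl_br (a + b) c = rl_br a c + rl_br b c"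
  by transfer (rule rl_eq.br_add_left)

lemma rl_br_add_right: "rl_br a (b + c) = rl_br a b + rl_br a c"
  by transfer (rule rl_eq.br_add_right)

lemma rl_br_self [simp]: "rl_br a a = 0"
  by transfer (rule rl_eq.br_alt)

lemma rl_br_jacobi: "rl_br a (rl_br b c) + (rl_br b (rl_br c a) + rl_br c (rl_br a b)) = 0"
  by transfer (rule rl_eq.jacobi)

lemma rl_br_zero_left [simp]: "rl_br 0 c = 0"
  by (metis add_cancel_right_right add_0 rl_br_add_left)

lemma rl_br_zero_right [simp]: "rl_br c 0 = 0"
  by (metis add_cancel_right_right add_0 rl_br_add_right)

lemma rl_br_minus_left [simp]: "rl_br (- a) c = - rl_br a c"
  by (metis add_eq_0_iff rl_br_zero_left rl_br_add_left add.right_inverse)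

lemma rl_br_minus_right [simp]: "rl_br c (- a) = - rl_br c a"
  by (metis add_eq_0_iff rl_br_zero_right rl_br_add_right add.right_inverse)

lemma rl_br_diff_left: "rl_br (a - b) c = rl_br a c - rl_br b c"
  by (simp only: diff_conv_add_uminus rl_br_add_left rl_br_minus_left)

lemma rl_br_diff_right: "rl_br c (a - b) = rl_br c a - rl_br c b"
  by (simp only: diff_conv_add_uminus rl_br_add_right rl_br_minus_right)

lemma rl_br_anticomm: "rl_br a b = - rl_br b a"
proof -
  have "rl_br a b + rl_br b a = 0"
    using rl_br_self[of "a + b"] unfolding rl_br_add_left rl_br_add_right by (simp add: add.commute)
  then show ?thesis by (simp add: eq_neg_iff_add_eq_0)
qed

lemma rl_br_br_left: "rl_br (rl_br a b) c = rl_br a (rl_br b c) - rl_br b (rl_br a c)"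
proof -
  have "rl_br c (rl_br a b) + (rl_br a (rl_br b c) - rl_br b (rl_br a c)) = 0"
    using rl_br_jacobi[of a b c] by (simp add: rl_br_anticomm[of c a] algebra_simps)
  then have "rl_br c (rl_br a b) = - (rl_br a (rl_br b c) - rl_br b (rl_br a c))"
    by (simp only: eq_neg_iff_add_eq_0)
  then show ?thesis using rl_br_anticomm[of "rl_br a b" c] by simp
qed

lemma rl_br_sum_right: "rl_br a (sum f A) = (\<Sum>i\<in>A. rl_br a (f i))"
  by (induction A rule: infinite_finite_induct) (auto simp: rl_br_add_right)

lemma rl_induct [case_names gen zero add minus br]:
  assumes "\<And>y. P (rl_gen y)" and "P 0"
    and "\<And>a b. P a \<Longrightarrow> P b \<Longrightarrow> P (a + b)" and "\<And>a. P a \<Longrightarrow> P (- a)"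
    and "\<And>a b. P a \<Longrightarrow> P b \<Longrightarrow> P (rl_br a b)"
  shows "P x"
proof (induction x rule: RL.abs_induct)
  case (1 e)
  show ?case
  proof (induction e)
    case (Gen y) then show ?case using assms(1) by (simp flip: rl_gen.abs_eq)
  next
    case Zero then show ?case using assms(2) by (simp flip: zero_RL.abs_eq)
  next
    case (Add e1 e2) then show ?case using assms(3) by (simp flip: plus_RL.abs_eq)
  next
    case (Neg e) then show ?case using assms(4) by (simp flip: uminus_RL.abs_eq)
  next
    case (Br e1 e2) then show ?case using assms(5) by (simp flip: rl_br.abs_eq)
  qed
qed

lemmas abs_RL_simps = plus_RL.abs_eq[symmetric] uminus_RL.abs_eq[symmetric]
  zero_RL.abs_eq[symmetric] rl_br.abs_eq[symmetric] rl_gen.abs_eq[symmetric]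

fun rl_rnorm :: "'y RL list \<Rightarrow> 'y RL" where
  "rl_rnorm [] = 0"
| "rl_rnorm [x] = x"
| "rl_rnorm (x # xs) = rl_br x (rl_rnorm xs)"

lemma rl_rnorm_Cons: "xs \<noteq> [] \<Longrightarrow> rl_rnorm (x # xs) = rl_br x (rl_rnorm xs)"
  by (cases xs) auto

lemma rl_rnorm_update_add:
  "i < length xs \<Longrightarrow> rl_rnorm (xs[i := a + b]) = rl_rnorm (xs[i := a]) + rl_rnorm (xs[i := b])"
proof (induction xs arbitrary: i)
  case (Cons x xs)
  show ?case
  proof (cases i)
    case 0
    then show ?thesis by (cases "xs = []") (simp_all add: rl_rnorm_Cons rl_br_add_left)
  next
    case (Suc j)
    with Cons.prems have "j < length xs" and "xs \<noteq> []" by auto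
    with Suc Cons.IH show ?thesis by (simp add: rl_rnorm_Cons rl_br_add_right)
  qed
qed simp

lemma rl_rnorm_eq_0_if_zero_mem: "0 \<in> set xs \<Longrightarrow> rl_rnorm xs = 0"
proof (induction xs rule: rl_rnorm.induct)
  case (3 x y xs)
  then show ?case by (cases "x = 0") auto
qed auto

definition rl_word :: "'y list \<Rightarrow> 'y RL" where
  "rl_word ys = rl_rnorm (map rl_gen ys)"

lemma rl_word_singleton [simp]: "rl_word [y] = rl_gen y"
  by (simp add: rl_word_def)

lemma rl_word_Cons: "ys \<noteq> [] \<Longrightarrow> rl_word (y # ys) = rl_br (rl_gen y) (rl_word ys)"
  by (simp add: rl_word_def rl_rnorm_Cons)

lemma rnorm_Cons: "ys \<noteq> [] \<Longrightarrow> rnorm (y # ys) = Br (Gen y) (rnorm ys)"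
  by (cases ys) auto

lemma abs_rnorm: "abs_RL (rnorm ys) = rl_word ys"
  unfolding rl_word_def
  by (induction ys rule: rnorm.induct) (auto simp flip: zero_RL.abs_eq rl_gen.abs_eq rl_br.abs_eq)

lemma rl_word_not_distinct: "2 \<le> length ys \<Longrightarrow> \<not> distinct ys \<Longrightarrow> rl_word ys = 0"
  unfolding abs_rnorm[symmetric] zero_RL.abs_eq RL.abs_eq_iff by (rule rl_eq.rel)

section \<open>Additive subgroups\<close>

lemma group_closure_map:
  fixes h :: "'a::ab_group_add \<Rightarrow> 'b::ab_group_add"
  assumes "s \<in> group_closure S"
    and hom: "\<And>a b. h (a - b) = h a - h b"
    and gens: "\<And>s. s \<in> S \<Longrightarrow> h s \<in> group_closure T"
  shows "h s \<in> group_closure T"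
  using \<open>s \<in> group_closure S\<close>
proof (induction rule: group_closure.induct)
  case (base s)
  have "h 0 = 0" using hom[of 0 0] by simp
  with base show ?case by (auto intro: gens)
next
  case (diff s t)
  then show ?case by (simp add: hom group_closure.diff)
qed

lemma group_closure_mset_repr:
  assumes "s \<in> group_closure (f ` A)"
  shows "\<exists>P N. set_mset P \<subseteq> A \<and> set_mset N \<subseteq> A \<and> s = (\<Sum>a\<in>#P. f a) - (\<Sum>a\<in>#N. f a)"
  using assms
proof (induction rule: group_closure.induct)
  case (base s)
  then consider "s = 0" | a where "a \<in> A" "s = f a" by auto
  then show ?case
  proof cases
    case 1 then show ?thesis by (intro exI[of _ "{#}"]) simp
  next
    case 2 then show ?thesis by (intro exI[of _ "{#a#}"] exI[of _ "{#}"]) simp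
  qed
next
  case (diff s t)
  then obtain P N P' N' where "set_mset P \<subseteq> A" "set_mset N \<subseteq> A" "set_mset P' \<subseteq> A"
    "set_mset N' \<subseteq> A" and s: "s = (\<Sum>a\<in>#P. f a) - (\<Sum>a\<in>#N. f a)"
    and t: "t = (\<Sum>a\<in>#P'. f a) - (\<Sum>a\<in>#N'. f a)"
    by blast
  then show ?case
    unfolding s t by (intro exI[of _ "P + N'"] exI[of _ "N + P'"]) (simp add: algebra_simps)
qed

lemma group_closure_rl_br_closed:
  assumes "s \<in> group_closure S"
    and gens: "\<And>y s. s \<in> S \<Longrightarrow> rl_br (rl_gen y) s \<in> group_closure S"
  shows "rl_br x s \<in> group_closure S"
  using \<open>s \<in> group_closure S\<close>
proof (induction x arbitrary: s rule: rl_induct)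
  case (gen y)
  show ?case
    using gen by (rule group_closure_map[where h = "rl_br (rl_gen y)"])
      (auto simp only: rl_br_diff_right gens)
next
  case zero
  show ?case by simp
next
  case (add a b)
  then show ?case unfolding rl_br_add_left by (intro group_closure_add)
next
  case (minus a)
  then show ?case unfolding rl_br_minus_left group_closure_minus_iff .
next
  case (br a b)
  then show ?case unfolding rl_br_br_left by (metis group_closure.diff)
qed

section \<open>The ideal generated by a generator is abelian\<close>

definition rl_ending_span :: "'y \<Rightarrow> 'y RL set" where
  "rl_ending_span z = group_closure (range (\<lambda>xs. rl_word (xs @ [z])))"

lemma rl_ending_span_induct [consumes 1, case_names word zero diff]:
  assumes "s \<in> rl_ending_span z"
    and "\<And>xs. P (rl_word (xs @ [z]))" and "P 0"
    and "\<And>s t. s \<in> rl_ending_span z \<Longrightarrow> t \<in> rl_ending_span z \<Longrightarrow> P s \<Longrightarrow> P t \<Longrightarrow> P (s - t)"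
  shows "P s"
  using assms(1) unfolding rl_ending_span_def
proof (induction rule: group_closure.induct)
  case (base s)
  then show ?case using assms(2,3) by blast
next
  case (diff s t)
  then show ?case using assms(4)[unfolded rl_ending_span_def] by blast
qed

lemma rl_word_mem_ending_span: "rl_word (xs @ [z]) \<in> rl_ending_span z"
  unfolding rl_ending_span_def by (rule group_closure.base) blast

lemma rl_br_mem_ending_span:
  assumes "s \<in> rl_ending_span z"
  shows "rl_br x s \<in> rl_ending_span z"
  using assms unfolding rl_ending_span_def
proof (rule group_closure_rl_br_closed)
  fix y s
  assume "s \<in> range (\<lambda>xs. rl_word (xs @ [z]))"
  then obtain xs where "s = rl_word (xs @ [z])" by blast
  then have "rl_br (rl_gen y) s = rl_word ((y # xs) @ [z])" by (simp add: rl_word_Cons)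
  then show "rl_br (rl_gen y) s \<in> group_closure (range (\<lambda>xs. rl_word (xs @ [z])))"
    using rl_word_mem_ending_span[of "y # xs" z] by (simp add: rl_ending_span_def)
qed

lemma rl_ideal_gen_subset_ending_span: "rl_ideal (rl_gen z) \<subseteq> rl_ending_span z"
proof
  fix a assume "a \<in> rl_ideal (rl_gen z)"
  then show "a \<in> rl_ending_span z"
  proof (induction rule: rl_ideal.induct)
    case gen
    show ?case using rl_word_mem_ending_span[of "[]" z] by simp
  next
    case zero
    show ?case unfolding rl_ending_span_def by (rule zero_in_group_closure)
  next
    case (add a b)
    show ?case using add.IH unfolding rl_ending_span_def by (rule group_closure_add)
  next
    case (neg a)
    show ?case using neg.IH unfolding rl_ending_span_def group_closure_minus_iff .
  next
    case (br_l a x)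
    show ?case using br_l.IH by (rule rl_br_mem_ending_span)
  next
    case (br_r a x)
    have "- rl_br x a \<in> rl_ending_span z"
      using rl_br_mem_ending_span[OF br_r.IH] unfolding rl_ending_span_def by simp
    then show ?case by (simp only: rl_br_anticomm[of a])
  qed
qed

lemma rl_ideal_gen_abelian:
  assumes "a \<in> rl_ideal (rl_gen z)" and "c \<in> rl_ideal (rl_gen z)"
  shows "rl_br a c = 0"
proof -
  have gen_z: "rl_br (rl_gen z) c = 0" if "c \<in> rl_ending_span z" for c
    using that
  proof (induction rule: rl_ending_span_induct)
    case (word xs)
    show ?case using rl_word_not_distinct[of "z # xs @ [z]"] by (simp add: rl_word_Cons)
  qed (simp_all add: rl_br_diff_right)
  have word: "rl_br (rl_word (xs @ [z])) c = 0" if "c \<in> rl_ending_span z" for xs c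
    using that
  proof (induction xs arbitrary: c)
    case Nil
    then show ?case by (simp add: gen_z)
  next
    case (Cons x xs)
    then show ?case by (simp add: rl_word_Cons rl_br_br_left rl_br_mem_ending_span)
  qed
  have c: "c \<in> rl_ending_span z" by (rule rl_ideal_gen_subset_ending_span[THEN subsetD, OF assms(2)])
  have "a \<in> rl_ending_span z" by (rule rl_ideal_gen_subset_ending_span[THEN subsetD, OF assms(1)])
  then show ?thesis
    by (induction rule: rl_ending_span_induct) (simp_all add: rl_br_diff_left word c)
qed

lemma rl_rnorm_mem_ideal:
  assumes "k < length xs" and "xs ! k \<in> rl_ideal z"
  shows "rl_rnorm xs \<in> rl_ideal z"
  using assms
proof (induction xs arbitrary: k rule: rl_rnorm.induct)
  case (3 x y xs)
  show ?case
  proof (cases k)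
    case 0
    then have "x \<in> rl_ideal z" using "3.prems"(2) by simp
    then show ?thesis by (simp add: rl_ideal.br_r)
  next
    case (Suc k')
    then have "rl_rnorm (y # xs) \<in> rl_ideal z" using "3.prems" by (intro "3.IH"[of k']) auto
    then show ?thesis by (simp add: rl_ideal.br_l)
  qed
qed auto

lemma rl_rnorm_eq_0_if_two_in_ideal:
  assumes "p \<noteq> q" and "p < length xs" and "q < length xs"
    and "xs ! p \<in> rl_ideal (rl_gen z)" and "xs ! q \<in> rl_ideal (rl_gen z)"
  shows "rl_rnorm xs = 0"
  using assms
proof (induction xs arbitrary: p q rule: rl_rnorm.induct)
  case (3 x y xs)
  show ?case
  proof (cases "p = 0 \<or> q = 0")
    case True
    then obtain k where "k < length (y # xs)" and "(y # xs) ! k \<in> rl_ideal (rl_gen z)"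
      and "x \<in> rl_ideal (rl_gen z)"
      using "3.prems" by (cases p; cases q) auto
    then show ?thesis by (simp add: rl_ideal_gen_abelian rl_rnorm_mem_ideal)
  next
    case False
    then obtain p' q' where "p = Suc p'" and "q = Suc q'" by (cases p; cases q) auto
    then have "rl_rnorm (y # xs) = 0" using "3.prems" by (intro "3.IH"[of p' q']) auto
    then show ?thesis by simp
  qed
qed auto

section \<open>Extending maps to derivations\<close>

lemma rl_rnorm_update_eq_0_if_repeat:
  assumes "p \<noteq> q" and "p < length ys" and "q < length ys" and "p \<noteq> i" and "q \<noteq> i"
    and "ys ! p = ys ! q"
  shows "rl_rnorm ((map rl_gen ys)[i := v]) = 0"
  using assms by (intro rl_rnorm_eq_0_if_two_in_ideal[of p q _ "ys ! p"]) (auto intro: rl_ideal.gen)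

lemma rl_rnorm_update_J_eq_0_if_other:
  assumes "i < length ys" and "j < length ys" and "k < length ys"
    and "j \<noteq> i" and "ys ! j = ys ! i" and "ys ! k \<noteq> ys ! i" and "v \<in> J (ys ! i)"
  shows "rl_rnorm ((map rl_gen ys)[i := v]) = 0"
proof -
  have "k \<noteq> i" using assms(6) by auto
  from assms(6,7) obtain a b where v: "v = a + b"
    and a: "a \<in> rl_ideal (rl_gen (ys ! i))" and b: "b \<in> rl_ideal (rl_gen (ys ! k))"
    unfolding J_def by blast
  have "rl_rnorm ((map rl_gen ys)[i := a]) = 0"
    using assms a by (intro rl_rnorm_eq_0_if_two_in_ideal[of i j _ "ys ! i"]) (auto intro: rl_ideal.gen)
  moreover have "rl_rnorm ((map rl_gen ys)[i := b]) = 0"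
    using assms b \<open>k \<noteq> i\<close>
    by (intro rl_rnorm_eq_0_if_two_in_ideal[of i k _ "ys ! k"]) (auto intro: rl_ideal.gen)
  ultimately show ?thesis using rl_rnorm_update_add[of i "map rl_gen ys" a b] assms(1) v by simp
qed

lemma rl_rnorm_update_J_eq_0:
  assumes nd: "\<not> distinct ys" and not_pair: "\<forall>z. ys \<noteq> [z, z]"
    and i: "i < length ys" and v: "v \<in> J (ys ! i)"
  shows "rl_rnorm ((map rl_gen ys)[i := v]) = 0"
proof -
  obtain p q where pq: "p \<noteq> q" "p < length ys" "q < length ys" "ys ! p = ys ! q"
    using nd by (auto simp: distinct_conv_nth)
  show ?thesis
  proof (cases "\<forall>k<length ys. ys ! k = ys ! i")
    case True
    have "length ys \<noteq> 2"
    proof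
      assume "length ys = 2"
      then have "ys = [ys ! i, ys ! i]" by (intro nth_equalityI) (auto simp: less_2_cases_iff True)
      then show False using not_pair by blast
    qed
    then have "3 \<le> length ys" using pq by auto
    define p' q' :: nat where "p' = (if i = 0 then 1 else 0)" and "q' = (if i = 2 then 1 else 2)"
    have "p' \<noteq> q'" "p' < length ys" "q' < length ys" "p' \<noteq> i" "q' \<noteq> i"
      using \<open>3 \<le> length ys\<close> by (auto simp: p'_def q'_def)
    moreover from this have "ys ! p' = ys ! q'" using True by simp
    ultimately show ?thesis by (rule rl_rnorm_update_eq_0_if_repeat)
  next
    case False
    then obtain k where k: "k < length ys" "ys ! k \<noteq> ys ! i" by blast
    show ?thesis
    proof (cases "\<exists>j<length ys. j \<noteq> i \<and> ys ! j = ys ! i")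
      case True
      then obtain j where "j < length ys" "j \<noteq> i" "ys ! j = ys ! i" by blast
      with i k v show ?thesis by (intro rl_rnorm_update_J_eq_0_if_other[of i ys j k]) auto
    next
      case False
      then have "p \<noteq> i" and "q \<noteq> i" using pq by metis+
      with pq show ?thesis by (intro rl_rnorm_update_eq_0_if_repeat[of p q])
    qed
  qed
qed

primrec lexpr_deriv :: "('y \<Rightarrow> 'y RL) \<Rightarrow> 'y lexpr \<Rightarrow> 'y RL" where
  "lexpr_deriv f (Gen y) = f y"
| "lexpr_deriv f Zero = 0"
| "lexpr_deriv f (Add a b) = lexpr_deriv f a + lexpr_deriv f b"
| "lexpr_deriv f (Neg a) = - lexpr_deriv f a"
| "lexpr_deriv f (Br a b) = rl_br (lexpr_deriv f a) (abs_RL b) + rl_br (abs_RL a) (lexpr_deriv f b)"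

lemma lexpr_deriv_rnorm:
  "lexpr_deriv f (rnorm ys) = (\<Sum>i<length ys. rl_rnorm ((map rl_gen ys)[i := f (ys ! i)]))"
proof (induction ys rule: rnorm.induct)
  case (3 y y' ys)
  define l where "l = y' # ys"
  have "l \<noteq> []" by (simp add: l_def)
  have IH: "lexpr_deriv f (rnorm l) = (\<Sum>i<length l. rl_rnorm ((map rl_gen l)[i := f (l ! i)]))"
    using "3.IH" by (simp add: l_def)
  have "lexpr_deriv f (rnorm (y # l)) =
      rl_br (f y) (rl_rnorm (map rl_gen l)) + rl_br (rl_gen y) (lexpr_deriv f (rnorm l))"
    using \<open>l \<noteq> []\<close> by (simp add: rnorm_Cons abs_rnorm rl_word_def rl_gen.abs_eq)
  also have "\<dots> = rl_rnorm (f y # map rl_gen l) +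
      (\<Sum>i<length l. rl_rnorm (rl_gen y # (map rl_gen l)[i := f (l ! i)]))"
    unfolding IH rl_br_sum_right using \<open>l \<noteq> []\<close> by (simp add: rl_rnorm_Cons)
  also have "\<dots> = (\<Sum>i<length (y # l). rl_rnorm ((map rl_gen (y # l))[i := f ((y # l) ! i)]))"
    unfolding length_Cons sum.lessThan_Suc_shift by simp
  finally show ?case by (simp add: l_def)
qed simp_all

lemma lexpr_deriv_rnorm_not_distinct:
  assumes "\<not> distinct ys" and "\<forall>y. f y \<in> J y"
  shows "lexpr_deriv f (rnorm ys) = 0"
proof (cases "\<exists>z. ys = [z, z]")
  case True
  then obtain z where "ys = [z, z]" by blast
  then show ?thesis by (simp add: rl_gen.abs_eq[symmetric] rl_br_anticomm[of "rl_gen z"])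
next
  case False
  then show ?thesis
    unfolding lexpr_deriv_rnorm using assms by (intro sum.neutral ballI rl_rnorm_update_J_eq_0) auto
qed

lemma lexpr_deriv_respects:
  assumes "\<forall>y. f y \<in> J y" and "rl_eq a b"
  shows "lexpr_deriv f a = lexpr_deriv f b"
  using \<open>rl_eq a b\<close>
proof (induction rule: rl_eq.induct)
  case (cong_br a b c d)
  then have "abs_RL a = abs_RL b" and "abs_RL c = abs_RL d" by (simp_all add: RL.abs_eq_iff)
  with cong_br.IH show ?case by simp
next
  case (br_add_left a b c)
  then show ?case by (simp add: abs_RL_simps rl_br_add_left rl_br_add_right algebra_simps)
next
  case (br_add_right a b c)
  then show ?case by (simp add: abs_RL_simps rl_br_add_left rl_br_add_right algebra_simps)
next
  case (br_alt a)
  then show ?case by (simp add: rl_br_anticomm[of "abs_RL a"])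
next
  case (jacobi a b c)
  let ?A = "abs_RL a" and ?B = "abs_RL b" and ?C = "abs_RL c"
    and ?dA = "lexpr_deriv f a" and ?dB = "lexpr_deriv f b" and ?dC = "lexpr_deriv f c"
  have "lexpr_deriv f (Add (Br a (Br b c)) (Add (Br b (Br c a)) (Br c (Br a b)))) =
    (rl_br ?dA (rl_br ?B ?C) + (rl_br ?B (rl_br ?C ?dA) + rl_br ?C (rl_br ?dA ?B))) +
    (rl_br ?A (rl_br ?dB ?C) + (rl_br ?dB (rl_br ?C ?A) + rl_br ?C (rl_br ?A ?dB))) +
    (rl_br ?A (rl_br ?B ?dC) + (rl_br ?B (rl_br ?dC ?A) + rl_br ?dC (rl_br ?A ?B)))"
    by (simp add: abs_RL_simps rl_br_add_right algebra_simps)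
  then show ?case by (simp only: rl_br_jacobi) simp
next
  case (rel ys)
  then show ?case using lexpr_deriv_rnorm_not_distinct assms(1) by simp
qed (auto simp: algebra_simps)

definition rl_deriv_ext :: "('y \<Rightarrow> 'y RL) \<Rightarrow> 'y RL \<Rightarrow> 'y RL" where
  "rl_deriv_ext f x = lexpr_deriv f (rep_RL x)"

lemma rl_deriv_ext_abs:
  assumes "\<forall>y. f y \<in> J y"
  shows "rl_deriv_ext f (abs_RL e) = lexpr_deriv f e"
  unfolding rl_deriv_ext_def
  by (rule lexpr_deriv_respects[OF assms]) (metis Quotient3_RL Quotient3_rep_abs rl_eq_equivp equivp_reflp)

lemma rl_deriv_ext_simps:
  assumes "\<forall>y. f y \<in> J y"
  shows "rl_deriv_ext f (a + b) = rl_deriv_ext f a + rl_deriv_ext f b"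
    and "rl_deriv_ext f (rl_br a b) = rl_br (rl_deriv_ext f a) b + rl_br a (rl_deriv_ext f b)"
    and "rl_deriv_ext f (rl_gen y) = f y"
proof -
  show "rl_deriv_ext f (a + b) = rl_deriv_ext f a + rl_deriv_ext f b"
    by (induction a rule: RL.abs_induct, induction b rule: RL.abs_induct)
      (simp add: rl_deriv_ext_abs[OF assms] plus_RL.abs_eq)
  show "rl_deriv_ext f (rl_br a b) = rl_br (rl_deriv_ext f a) b + rl_br a (rl_deriv_ext f b)"
    by (induction a rule: RL.abs_induct, induction b rule: RL.abs_induct)
      (simp add: rl_deriv_ext_abs[OF assms] rl_br.abs_eq)
  show "rl_deriv_ext f (rl_gen y) = f y"
    by (simp add: rl_deriv_ext_abs[OF assms] rl_gen.abs_eq)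
qed

lemma rl_derivation_rl_deriv_ext:
  assumes "\<forall>y. f y \<in> rl_geq2 \<and> f y \<in> J y"
  shows "rl_derivation (rl_deriv_ext f)"
proof -
  have "\<forall>y. f y \<in> J y" using assms by blast
  then show ?thesis unfolding rl_derivation_def using assms by (simp add: rl_deriv_ext_simps)
qed

lemma rl_derivation_zero: "rl_derivation d \<Longrightarrow> d 0 = 0"
  unfolding rl_derivation_def by (metis add_cancel_right_right add_0)

lemma rl_derivation_minus: "rl_derivation d \<Longrightarrow> d (- a) = - d a"
  using rl_derivation_zero[of d] unfolding rl_derivation_def
  by (metis add.right_inverse add_eq_0_iff)

lemma rl_derivation_eqI:
  assumes "rl_derivation d1" and "rl_derivation d2" and "\<And>y. d1 (rl_gen y) = d2 (rl_gen y)"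
  shows "d1 = d2"
proof
  fix x
  show "d1 x = d2 x"
    by (induction x rule: rl_induct)
      (use assms in \<open>simp_all add: rl_derivation_zero rl_derivation_minus rl_derivation_def\<close>)
qed

section \<open>Killing a generator\<close>

primrec lexpr_kill :: "'y \<Rightarrow> 'y lexpr \<Rightarrow> 'y lexpr" where
  "lexpr_kill z (Gen y) = (if y = z then Zero else Gen y)"
| "lexpr_kill z Zero = Zero"
| "lexpr_kill z (Add a b) = Add (lexpr_kill z a) (lexpr_kill z b)"
| "lexpr_kill z (Neg a) = Neg (lexpr_kill z a)"
| "lexpr_kill z (Br a b) = Br (lexpr_kill z a) (lexpr_kill z b)"

lemma abs_lexpr_kill_rnorm:
  "abs_RL (lexpr_kill z (rnorm ys)) = rl_rnorm (map (\<lambda>y. if y = z then 0 else rl_gen y) ys)"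
  by (induction ys rule: rnorm.induct) (auto simp: abs_RL_simps)

lemma lexpr_kill_respects: "rl_eq a b \<Longrightarrow> rl_eq (lexpr_kill z a) (lexpr_kill z b)"
proof (induction rule: rl_eq.induct)
  case (rel ys)
  have "abs_RL (lexpr_kill z (rnorm ys)) = 0"
  proof (cases "z \<in> set ys")
    case True
    then show ?thesis unfolding abs_lexpr_kill_rnorm by (intro rl_rnorm_eq_0_if_zero_mem) force
  next
    case False
    then have map_eq: "map (\<lambda>y. if y = z then 0 else rl_gen y) ys = map rl_gen ys" by auto
    show ?thesis
      unfolding abs_lexpr_kill_rnorm map_eq rl_word_def[symmetric] by (rule rl_word_not_distinct[OF rel])
  qed
  then show ?case by (simp add: zero_RL.abs_eq RL.abs_eq_iff)
qed (auto intro: rl_eq.intros)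

lift_definition rl_kill :: "'y \<Rightarrow> 'y RL \<Rightarrow> 'y RL" is lexpr_kill
  by (rule lexpr_kill_respects)

lemma rl_kill_gen [simp]: "rl_kill z (rl_gen y) = (if y = z then 0 else rl_gen y)"
  by transfer (simp add: rl_eq.refl)

lemma rl_kill_zero [simp]: "rl_kill z 0 = 0"
  by transfer (simp add: rl_eq.refl)

lemma rl_kill_add [simp]: "rl_kill z (a + b) = rl_kill z a + rl_kill z b"
  by transfer (simp add: rl_eq.refl)

lemma rl_kill_minus [simp]: "rl_kill z (- a) = - rl_kill z a"
  by transfer (simp add: rl_eq.refl)

lemma rl_kill_br [simp]: "rl_kill z (rl_br a b) = rl_br (rl_kill z a) (rl_kill z b)"
  by transfer (simp add: rl_eq.refl)

lemma rl_kill_idem: "rl_kill z (rl_kill z x) = rl_kill z x"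
  by (induction x rule: rl_induct) simp_all

lemma rl_kill_commute: "rl_kill z (rl_kill z' x) = rl_kill z' (rl_kill z x)"
  by (induction x rule: rl_induct) simp_all

lemma diff_rl_kill_mem_ideal: "x - rl_kill z x \<in> rl_ideal (rl_gen z)"
proof (induction x rule: rl_induct)
  case (gen y)
  then show ?case by (simp add: rl_ideal.gen rl_ideal.zero)
next
  case zero
  then show ?case by (simp add: rl_ideal.zero)
next
  case (add a b)
  have "a + b - rl_kill z (a + b) = (a - rl_kill z a) + (b - rl_kill z b)" by simp
  then show ?case using add.IH by (metis rl_ideal.add)
next
  case (minus a)
  have "- a - rl_kill z (- a) = - (a - rl_kill z a)" by simp
  then show ?case using minus.IH by (metis rl_ideal.neg)
next
  case (br a b)
  have "rl_br a b - rl_kill z (rl_br a b) =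
      rl_br (a - rl_kill z a) b + rl_br (rl_kill z a) (b - rl_kill z b)"
    by (simp add: rl_br_diff_left rl_br_diff_right)
  then show ?case using br.IH by (metis rl_ideal.add rl_ideal.br_l rl_ideal.br_r)
qed

section \<open>Coordinates with respect to canonical words\<close>

text \<open>RL[Y] acts on integer-valued functions on words: a generator y sends q to the function
  mapping a distinct word y # w to q w and every other word to 0. Hence rl_coeff x w is the
  coefficient of the word w in the expansion of x in the free associative ring, where words with a
  repeated letter are discarded.\<close>

definition letter_action :: "'y \<Rightarrow> ('y list \<Rightarrow> int) \<Rightarrow> 'y list \<Rightarrow> int" where
  "letter_action y q w = (case w of [] \<Rightarrow> 0 | a # w' \<Rightarrow> if a = y \<and> distinct w then q w' else 0)"

lemma letter_action_Nil [simp]: "letter_action y q [] = 0"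
  by (simp add: letter_action_def)

lemma letter_action_Cons [simp]:
  "letter_action y q (a # w) = (if a = y \<and> distinct (a # w) then q w else 0)"
  by (simp add: letter_action_def)

primrec lexpr_action :: "'y lexpr \<Rightarrow> ('y list \<Rightarrow> int) \<Rightarrow> 'y list \<Rightarrow> int" where
  "lexpr_action (Gen y) q = letter_action y q"
| "lexpr_action Zero q = (\<lambda>w. 0)"
| "lexpr_action (Add a b) q = (\<lambda>w. lexpr_action a q w + lexpr_action b q w)"
| "lexpr_action (Neg a) q = (\<lambda>w. - lexpr_action a q w)"
| "lexpr_action (Br a b) q = (\<lambda>w. lexpr_action a (lexpr_action b q) w - lexpr_action b (lexpr_action a q) w)"

lemma lexpr_action_add: "lexpr_action e (\<lambda>w. p w + q w) = (\<lambda>w. lexpr_action e p w + lexpr_action e q w)"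
proof (induction e arbitrary: p q)
  case (Gen y)
  show ?case by (auto simp: fun_eq_iff letter_action_def split: list.split)
next
  case (Br a b)
  then show ?case by (simp add: algebra_simps)
qed (simp_all add: algebra_simps)

lemma lexpr_action_minus: "lexpr_action e (\<lambda>w. - p w) = (\<lambda>w. - lexpr_action e p w)"
proof (induction e arbitrary: p)
  case (Gen y)
  show ?case by (auto simp: fun_eq_iff letter_action_def split: list.split)
qed simp_all

lemma lexpr_action_diff: "lexpr_action e (\<lambda>w. p w - q w) = (\<lambda>w. lexpr_action e p w - lexpr_action e q w)"
  using lexpr_action_add[of e p "\<lambda>w. - q w"] by (simp add: lexpr_action_minus)

lemma lexpr_action_distinct: "lexpr_action e q w \<noteq> 0 \<Longrightarrow> distinct w"
proof (induction e arbitrary: q w)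
  case (Gen y)
  then show ?case by (cases w) (auto split: if_splits)
next
  case (Add a b)
  then show ?case by (cases "lexpr_action a q w = 0") auto
next
  case (Br a b)
  then show ?case by (cases "lexpr_action a (lexpr_action b q) w = 0") auto
qed auto

lemma lexpr_action_rnorm_support:
  "lexpr_action (rnorm ys) q w \<noteq> 0 \<Longrightarrow> \<exists>u v. w = u @ v \<and> mset u = mset ys \<and> q v \<noteq> 0"
proof (induction ys arbitrary: q w rule: rnorm.induct)
  case (2 y)
  then show ?case by (cases w) (auto split: if_splits)
next
  case (3 y y' ys)
  let ?R = "rnorm (y' # ys)"
  have "letter_action y (lexpr_action ?R q) w \<noteq> 0 \<or> lexpr_action ?R (letter_action y q) w \<noteq> 0"
    using "3.prems" by auto
  then show ?case
  proof
    assume "letter_action y (lexpr_action ?R q) w \<noteq> 0"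
    then obtain w' where w: "w = y # w'" and "lexpr_action ?R q w' \<noteq> 0"
      by (cases w) (auto split: if_splits)
    then obtain u v where "w' = u @ v" "mset u = mset (y' # ys)" "q v \<noteq> 0"
      using "3.IH" by blast
    with w show ?case by (intro exI[of _ "y # u"] exI[of _ v]) auto
  next
    assume "lexpr_action ?R (letter_action y q) w \<noteq> 0"
    then obtain u v where uv: "w = u @ v" "mset u = mset (y' # ys)" "letter_action y q v \<noteq> 0"
      using "3.IH" by blast
    then obtain v' where "v = y # v'" "q v' \<noteq> 0"
      by (cases v) (auto split: if_splits)
    with uv show ?case by (intro exI[of _ "u @ [y]"] exI[of _ v']) auto
  qed
qed simp

lemma lexpr_action_rnorm_not_distinct:
  assumes "\<not> distinct ys"
  shows "lexpr_action (rnorm ys) q w = 0"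
proof (rule ccontr)
  assume nz: "lexpr_action (rnorm ys) q w \<noteq> 0"
  then obtain u v where "w = u @ v" "mset u = mset ys"
    using lexpr_action_rnorm_support by blast
  moreover have "distinct w" using nz by (rule lexpr_action_distinct)
  ultimately show False using assms mset_eq_imp_distinct_iff by fastforce
qed

lemma lexpr_action_respects: "rl_eq a b \<Longrightarrow> lexpr_action a = lexpr_action b"
proof (induction rule: rl_eq.induct)
  case (cong_add a b c d)
  then show ?case by simp
next
  case (cong_neg a b)
  then show ?case by simp
next
  case (cong_br a b c d)
  then show ?case by simp
next
  case (br_add_left a b c)
  then show ?case by (simp add: fun_eq_iff lexpr_action_add)
next
  case (br_add_right a b c)
  then show ?case by (simp add: fun_eq_iff lexpr_action_add)
next
  case (jacobi a b c)
  then show ?case by (simp add: fun_eq_iff lexpr_action_diff)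
next
  case (rel ys)
  then show ?case by (simp add: fun_eq_iff lexpr_action_rnorm_not_distinct)
qed (simp_all add: fun_eq_iff)

lift_definition rl_action :: "'y RL \<Rightarrow> ('y list \<Rightarrow> int) \<Rightarrow> 'y list \<Rightarrow> int" is lexpr_action
  by (rule lexpr_action_respects)

lemma rl_action_gen: "rl_action (rl_gen y) = letter_action y"
  by transfer (simp add: fun_eq_iff)

lemma rl_action_zero: "rl_action 0 q w = 0"
  by transfer simp

lemma rl_action_add: "rl_action (a + b) q w = rl_action a q w + rl_action b q w"
  by transfer simp

lemma rl_action_minus: "rl_action (- a) q w = - rl_action a q w"
  by transfer simp

lemma rl_action_br: "rl_action (rl_br a b) q w = rl_action a (rl_action b q) w - rl_action b (rl_action a q) w"
  by transfer simp

lemma rl_action_word: "rl_action (rl_word ys) = lexpr_action (rnorm ys)"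
  by (simp flip: abs_rnorm add: rl_action.abs_eq)

lemma rl_action_distinct: "rl_action x q w \<noteq> 0 \<Longrightarrow> distinct w"
  by transfer (rule lexpr_action_distinct)

lemma rl_action_kill_Cons: "rl_action (rl_kill z x) q (z # w) = 0"
  by (induction x arbitrary: q w rule: rl_induct)
    (simp_all add: rl_action_gen rl_action_zero rl_action_add rl_action_minus rl_action_br)

lemma rl_action_kill_mem:
  assumes "\<And>v. z \<in> set v \<Longrightarrow> q v = 0" and "z \<in> set w"
  shows "rl_action (rl_kill z x) q w = 0"
  using assms
proof (induction x arbitrary: q w rule: rl_induct)
  case (gen y)
  then show ?case by (cases w) (auto simp: rl_action_gen rl_action_zero)
next
  case (add a b)
  then show ?case by (simp add: rl_action_add)
next
  case (minus a)
  then show ?case by (simp add: rl_action_minus)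
next
  case (br a b)
  have "rl_action (rl_kill z a) (rl_action (rl_kill z b) q) w = 0"
    using br.prems by (intro br.IH(1) br.IH(2)) auto
  moreover have "rl_action (rl_kill z b) (rl_action (rl_kill z a) q) w = 0"
    using br.prems by (intro br.IH(1) br.IH(2)) auto
  ultimately show ?case by (simp add: rl_action_br)
qed (simp add: rl_action_zero)

definition rl_coeff :: "'y RL \<Rightarrow> 'y list \<Rightarrow> int" where
  "rl_coeff x = rl_action x (\<lambda>w. if w = [] then 1 else 0)"

lemma rl_coeff_sum_mset: "rl_coeff (\<Sum>a\<in>#P. f a) w = (\<Sum>a\<in>#P. rl_coeff (f a) w)"
  by (induction P) (simp_all add: rl_coeff_def rl_action_add rl_action_zero)

lemma rl_coeff_diff: "rl_coeff (a - b) w = rl_coeff a w - rl_coeff b w"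
  by (simp only: rl_coeff_def diff_conv_add_uminus rl_action_add rl_action_minus)

lemma lexpr_action_rnorm_snoc:
  assumes "x \<notin> set t"
  shows "lexpr_action (rnorm (t @ [x])) (\<lambda>w. if w = [] then 1 else 0) (w @ [x]) =
    (if w = t \<and> distinct (w @ [x]) then 1 else 0)"
  using assms
proof (induction t arbitrary: w)
  case Nil
  then show ?case by (cases w) auto
next
  case (Cons y t)
  let ?\<delta> = "\<lambda>w. if w = [] then 1 else 0 :: int" and ?R = "rnorm (t @ [x])"
  have "y \<noteq> x" using Cons.prems by auto
  have tail_vanishes: "lexpr_action ?R (letter_action y ?\<delta>) (w @ [x]) = 0"
  proof (rule ccontr)
    assume "lexpr_action ?R (letter_action y ?\<delta>) (w @ [x]) \<noteq> 0"
    then obtain u v where "w @ [x] = u @ v" and "letter_action y ?\<delta> v \<noteq> 0"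
      using lexpr_action_rnorm_support by blast
    moreover from \<open>letter_action y ?\<delta> v \<noteq> 0\<close> have "v = [y]"
      by (cases v) (auto split: if_splits)
    ultimately show False using \<open>y \<noteq> x\<close> by simp
  qed
  have "lexpr_action (rnorm ((y # t) @ [x])) ?\<delta> (w @ [x]) = letter_action y (lexpr_action ?R ?\<delta>) (w @ [x])"
    using tail_vanishes by (simp add: rnorm_Cons)
  also have "\<dots> = (if w = y # t \<and> distinct (w @ [x]) then 1 else 0)"
  proof (cases w)
    case (Cons a w')
    then show ?thesis using Cons.IH[of w'] Cons.prems by auto
  qed (use \<open>y \<noteq> x\<close> in auto)
  finally show ?case .
qed

text \<open>The words rl_word l with l canonical form a basis of the additive group of RL[Y], with
  coordinates rl_coeff.\<close>

definition canonical_word :: "'y list \<Rightarrow> bool" where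
  "canonical_word l \<longleftrightarrow> l \<noteq> [] \<and> distinct l \<and> last l = (SOME x. x \<in> set l)"

lemma rl_coeff_word_canonical:
  assumes l: "canonical_word l" and l': "canonical_word l'"
  shows "rl_coeff (rl_word l) l' = (if l = l' then 1 else 0)"
proof (cases "set l = set l'")
  case True
  define x where "x = last l"
  have "l \<noteq> []" "l' \<noteq> []" "last l' = x" using l l' True by (simp_all add: canonical_word_def x_def)
  then obtain t t' where l_eq: "l = t @ [x]" and l'_eq: "l' = t' @ [x]"
    unfolding x_def by (metis append_butlast_last_id)
  then have "x \<notin> set t" and "distinct (t' @ [x])" using l l' by (simp_all add: canonical_word_def)
  then show ?thesis
    unfolding rl_coeff_def rl_action_word l_eq l'_eq by (simp add: lexpr_action_rnorm_snoc)
next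
  case False
  have "rl_coeff (rl_word l) l' = 0"
  proof (rule ccontr)
    assume "rl_coeff (rl_word l) l' \<noteq> 0"
    then obtain u v where "l' = u @ v" "mset u = mset l" "(if v = [] then 1 else 0 :: int) \<noteq> 0"
      unfolding rl_coeff_def rl_action_word by (blast dest: lexpr_action_rnorm_support)
    then show False using False by (metis append_Nil2 set_mset_mset)
  qed
  then show ?thesis using False by auto
qed

text \<open>The letter set T is recorded so that the last letter x can be the one chosen by SOME.\<close>

definition rl_ending_span_letters :: "'y \<Rightarrow> 'y set \<Rightarrow> 'y RL set" where
  "rl_ending_span_letters x T = group_closure ((\<lambda>t. rl_word (t @ [x])) ` {t. set (t @ [x]) = T})"

lemma rl_word_snoc_mem_ending_span_letters:
  "set (t @ [x]) = T \<Longrightarrow> rl_word (t @ [x]) \<in> rl_ending_span_letters x T"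
  unfolding rl_ending_span_letters_def by (rule group_closure.base) blast

lemma rl_br_gen_mem_ending_span_letters:
  assumes "s \<in> rl_ending_span_letters x T"
  shows "rl_br (rl_gen c) s \<in> rl_ending_span_letters x (insert c T)"
  using assms unfolding rl_ending_span_letters_def
proof (rule group_closure_map[where h = "rl_br (rl_gen c)"])
  fix s
  assume "s \<in> (\<lambda>t. rl_word (t @ [x])) ` {t. set (t @ [x]) = T}"
  then obtain t where "s = rl_word (t @ [x])" and "set (t @ [x]) = T" by blast
  then have "rl_br (rl_gen c) s = rl_word ((c # t) @ [x])" and "set ((c # t) @ [x]) = insert c T"
    by (auto simp: rl_word_Cons)
  then show "rl_br (rl_gen c) s \<in> group_closure ((\<lambda>t. rl_word (t @ [x])) ` {t. set (t @ [x]) = insert c T})"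
    using rl_word_snoc_mem_ending_span_letters unfolding rl_ending_span_letters_def by metis
qed (rule rl_br_diff_right)

lemma rl_br_word_mem_ending_span_letters:
  assumes "m \<noteq> []" and "s \<in> rl_ending_span_letters x T"
  shows "rl_br (rl_word m) s \<in> rl_ending_span_letters x (set m \<union> T)"
  using assms
proof (induction m arbitrary: s T)
  case (Cons a m)
  show ?case
  proof (cases "m = []")
    case True
    then show ?thesis using rl_br_gen_mem_ending_span_letters[OF Cons.prems(2)] by simp
  next
    case False
    have "rl_br (rl_gen a) (rl_br (rl_word m) s) \<in> rl_ending_span_letters x (set (a # m) \<union> T)"
      using rl_br_gen_mem_ending_span_letters[OF Cons.IH[OF False Cons.prems(2)]] by simp
    moreover have "rl_br (rl_word m) (rl_br (rl_gen a) s) \<in> rl_ending_span_letters x (set (a # m) \<union> T)"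
      using Cons.IH[OF False rl_br_gen_mem_ending_span_letters[OF Cons.prems(2)]] by simp
    ultimately show ?thesis
      using False by (simp add: rl_word_Cons rl_br_br_left rl_ending_span_letters_def group_closure.diff)
  qed
qed simp

lemma rl_word_mem_ending_span_letters:
  "x \<in> set l \<Longrightarrow> rl_word l \<in> rl_ending_span_letters x (set l)"
proof (induction l)
  case (Cons a l)
  show ?case
  proof (cases "x \<in> set l")
    case True
    then have "l \<noteq> []" by auto
    then show ?thesis
      using rl_br_gen_mem_ending_span_letters[OF Cons.IH[OF True], of a] by (simp add: rl_word_Cons)
  next
    case False
    then have "a = x" using Cons.prems by simp
    show ?thesis
    proof (cases "l = []")
      case True
      then show ?thesis using rl_word_snoc_mem_ending_span_letters[of "[]" x] \<open>a = x\<close> by simp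
    next
      case False
      have "rl_br (rl_word l) (rl_gen x) \<in> rl_ending_span_letters x (set l \<union> {x})"
        using rl_br_word_mem_ending_span_letters[OF False, of "rl_gen x" x "{x}"]
          rl_word_snoc_mem_ending_span_letters[of "[]" x "{x}"] by simp
      then have "- rl_br (rl_word l) (rl_gen x) \<in> rl_ending_span_letters x (set (a # l))"
        using \<open>a = x\<close> by (simp add: rl_ending_span_letters_def insert_commute)
      then show ?thesis
        using False \<open>a = x\<close> by (simp add: rl_word_Cons rl_br_anticomm[of "rl_gen x"])
    qed
  qed
qed simp

lemma rl_ending_span_letters_subset_canonical:
  assumes "x = (SOME x. x \<in> T)" and "s \<in> rl_ending_span_letters x T"
  shows "s \<in> group_closure (rl_word ` Collect canonical_word)"
  using assms(2) unfolding rl_ending_span_letters_def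
proof (rule group_closure_map[where h = id, simplified])
  fix s
  assume "s \<in> (\<lambda>t. rl_word (t @ [x])) ` {t. set (t @ [x]) = T}"
  then obtain t where s: "s = rl_word (t @ [x])" and T: "set (t @ [x]) = T" by blast
  show "s \<in> group_closure (rl_word ` Collect canonical_word)"
  proof (cases "distinct (t @ [x])")
    case True
    then have "canonical_word (t @ [x])" using T assms(1) by (simp add: canonical_word_def)
    then show ?thesis unfolding s by (intro group_closure.base) blast
  next
    case False
    then have "2 \<le> length (t @ [x])" by (cases t) auto
    then have "s = 0" using False s by (simp add: rl_word_not_distinct)
    then show ?thesis by simp
  qed
qed

lemma rl_word_mem_canonical_span: "l \<noteq> [] \<Longrightarrow> rl_word l \<in> group_closure (rl_word ` Collect canonical_word)"
  by (rule rl_ending_span_letters_subset_canonical[OF HOL.refl rl_word_mem_ending_span_letters])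
    (simp add: some_in_eq)

lemma rl_mem_canonical_span: "x \<in> group_closure (rl_word ` Collect canonical_word)"
proof (induction x rule: rl_induct)
  case (gen y)
  then show ?case using rl_word_mem_canonical_span[of "[y]"] by simp
next
  case (add a b)
  then show ?case by (rule group_closure_add)
next
  case (br a b)
  show ?case using br.IH(2)
  proof (rule group_closure_rl_br_closed)
    fix c s
    assume "s \<in> rl_word ` Collect canonical_word"
    then obtain l where "s = rl_word l" and "l \<noteq> []" by (auto simp: canonical_word_def)
    then show "rl_br (rl_gen c) s \<in> group_closure (rl_word ` Collect canonical_word)"
      using rl_word_mem_canonical_span[of "c # l"] by (simp add: rl_word_Cons)
  qed
qed simp_all

lemma rl_eq_0_if_coeff_eq_0:
  assumes "\<And>w. rl_coeff x w = 0"
  shows "x = 0"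
proof -
  obtain P N where P: "set_mset P \<subseteq> Collect canonical_word" and N: "set_mset N \<subseteq> Collect canonical_word"
    and x: "x = (\<Sum>l\<in>#P. rl_word l) - (\<Sum>l\<in>#N. rl_word l)"
    using group_closure_mset_repr[OF rl_mem_canonical_span] by blast
  have "count P l = count N l" for l
  proof (cases "canonical_word l")
    case True
    have sum_eq: "(\<Sum>a\<in>#M. rl_coeff (rl_word a) l) = of_nat (count M l)"
      if "set_mset M \<subseteq> Collect canonical_word" for M
    proof -
      have "(\<Sum>a\<in>#M. rl_coeff (rl_word a) l) = (\<Sum>a\<in>#M. if a = l then 1 else 0)"
        using that True
        by (intro arg_cong[where f = sum_mset] image_mset_cong) (auto simp: rl_coeff_word_canonical)
      then show ?thesis by (simp add: sum_mset_delta)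
    qed
    have "rl_coeff x l = of_nat (count P l) - of_nat (count N l)"
      unfolding x rl_coeff_diff rl_coeff_sum_mset using sum_eq P N by simp
    then show ?thesis using assms by simp
  next
    case False
    then show ?thesis using P N by (metis count_eq_zero_iff mem_Collect_eq subset_iff)
  qed
  then have "P = N" by (rule multiset_eqI)
  then show ?thesis using x by simp
qed

section \<open>Derivations send generators into J\<close>

text \<open>The coefficient of the word y # y' # w in the relation is -2 times that of w in x.\<close>

lemma rl_kill_fixed_eq_0:
  assumes "y \<noteq> y'" and fix_y: "rl_kill y x = x" and fix_y': "rl_kill y' x = x"
    and rel: "rl_br x (rl_br (rl_gen y) (rl_gen y')) + rl_br (rl_gen y) (rl_br x (rl_gen y')) = 0"
  shows "x = 0"
proof (rule rl_eq_0_if_coeff_eq_0)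
  fix w
  have Cons_y: "rl_action x q (y # v) = 0" and Cons_y': "rl_action x q (y' # v) = 0" for q v
    using rl_action_kill_Cons[of y x q v] rl_action_kill_Cons[of y' x q v] fix_y fix_y' by simp_all
  show "rl_coeff x w = 0"
  proof (rule ccontr)
    assume nz: "rl_coeff x w \<noteq> 0"
    have not_in: "z \<notin> set w" if "rl_kill z x = x" for z
    proof
      assume "z \<in> set w"
      then have "rl_action (rl_kill z x) (\<lambda>w. if w = [] then 1 else 0) w = 0"
        by (intro rl_action_kill_mem) auto
      with nz that show False by (simp add: rl_coeff_def)
    qed
    have "y \<notin> set w" and "y' \<notin> set w" using not_in fix_y fix_y' by auto
    moreover have "distinct w" using nz unfolding rl_coeff_def by (rule rl_action_distinct)
    ultimately have "distinct (y # y' # w)" using \<open>y \<noteq> y'\<close> by simp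
    then have "rl_coeff (rl_br x (rl_br (rl_gen y) (rl_gen y')) + rl_br (rl_gen y) (rl_br x (rl_gen y')))
        (y # y' # w) = - 2 * rl_coeff x w"
      using \<open>y \<noteq> y'\<close>
      by (simp add: rl_coeff_def rl_action_add rl_action_br rl_action_gen Cons_y Cons_y')
    with nz show False by (simp add: rel rl_coeff_def rl_action_zero)
  qed
qed

text \<open>Apply d to the defining relation [y, [y, y']] = 0: the components of d y in the abelian
  ideals generated by y and y' drop out.\<close>

lemma rl_derivation_gen_relation:
  assumes d: "rl_derivation d" and dy: "d (rl_gen y) = u + m + w"
    and u: "u \<in> rl_ideal (rl_gen y)" and m: "m \<in> rl_ideal (rl_gen y')"
  shows "rl_br w (rl_br (rl_gen y) (rl_gen y')) + rl_br (rl_gen y) (rl_br w (rl_gen y')) = 0"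
proof -
  let ?X = "rl_br (rl_gen y) (rl_gen y')"
  have gy: "rl_gen y \<in> rl_ideal (rl_gen y)" and gy': "rl_gen y' \<in> rl_ideal (rl_gen y')"
    by (rule rl_ideal.gen)+
  have X: "?X \<in> rl_ideal (rl_gen y)" "?X \<in> rl_ideal (rl_gen y')"
    by (rule rl_ideal.br_r[OF gy], rule rl_ideal.br_l[OF gy'])
  have "rl_br (rl_gen y) ?X = 0"
    using rl_word_not_distinct[of "[y, y, y']"] by (simp add: rl_word_Cons)
  then have "0 = d (rl_br (rl_gen y) ?X)" using rl_derivation_zero[OF d] by simp
  also have "\<dots> = rl_br (d (rl_gen y)) ?X + rl_br (rl_gen y) (rl_br (d (rl_gen y)) (rl_gen y'))
      + rl_br (rl_gen y) (rl_br (rl_gen y) (d (rl_gen y')))"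
    using d by (simp add: rl_derivation_def rl_br_add_right)
  also have "\<dots> = rl_br w ?X + rl_br (rl_gen y) (rl_br w (rl_gen y'))"
  proof -
    have "rl_br u ?X = 0" "rl_br m ?X = 0" "rl_br m (rl_gen y') = 0"
      using u m X gy' by (auto intro: rl_ideal_gen_abelian)
    moreover have "rl_br (rl_gen y) (rl_br u (rl_gen y')) = 0"
      using gy u by (intro rl_ideal_gen_abelian rl_ideal.br_r)
    moreover have "rl_br (rl_gen y) (rl_br (rl_gen y) (d (rl_gen y'))) = 0"
      using gy by (intro rl_ideal_gen_abelian rl_ideal.br_r)
    ultimately show ?thesis unfolding dy by (simp add: rl_br_add_left rl_br_add_right)
  qed
  finally show ?thesis by simp
qed

lemma rl_derivation_gen_mem_J:
  assumes d: "rl_derivation d"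
  shows "d (rl_gen y) \<in> J y"
proof -
  define x where "x = d (rl_gen y)"
  define v where "v = rl_kill y x"
  have u: "x - v \<in> rl_ideal (rl_gen y)" unfolding v_def by (rule diff_rl_kill_mem_ideal)
  have v: "v \<in> rl_ideal (rl_gen y')" if "y' \<noteq> y" for y'
  proof -
    define w where "w = rl_kill y' v"
    have m: "v - w \<in> rl_ideal (rl_gen y')" unfolding w_def by (rule diff_rl_kill_mem_ideal)
    have fix_y: "rl_kill y w = w"
      unfolding w_def v_def by (simp only: rl_kill_commute[of y y'] rl_kill_idem)
    have fix_y': "rl_kill y' w = w" unfolding w_def by (rule rl_kill_idem)
    have "d (rl_gen y) = (x - v) + (v - w) + w" by (simp add: x_def)
    then have rel: "rl_br w (rl_br (rl_gen y) (rl_gen y')) + rl_br (rl_gen y) (rl_br w (rl_gen y')) = 0"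
      by (rule rl_derivation_gen_relation[OF d _ u m])
    have "y \<noteq> y'" using that by simp
    then have "w = 0" using fix_y fix_y' rel by (rule rl_kill_fixed_eq_0)
    with m show ?thesis by (simp only: diff_zero)
  qed
  have "x = (x - v) + v" by simp
  moreover have "v \<in> (\<Inter>y'\<in>{y'. y' \<noteq> y}. rl_ideal (rl_gen y'))" using v by blast
  ultimately show ?thesis unfolding J_def x_def[symmetric] using u by blast
qed

theorem proposition3p2:
  shows "(\<forall>d :: 'y RL \<Rightarrow> 'y RL. rl_derivation d \<longrightarrow> (\<forall>y. d (rl_gen y) \<in> J y))
       \<and> (\<forall>f :: 'y \<Rightarrow> 'y RL. (\<forall>y. f y \<in> rl_geq2 \<and> f y \<in> J y) \<longrightarrow>
              (\<exists>!d. rl_derivation d \<and> (\<forall>y. d (rl_gen y) = f y)))"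
proof (intro conjI allI impI)
  fix d :: "'y RL \<Rightarrow> 'y RL" and y
  assume "rl_derivation d"
  then show "d (rl_gen y) \<in> J y" by (rule rl_derivation_gen_mem_J)
next
  fix f :: "'y \<Rightarrow> 'y RL"
  assume f: "\<forall>y. f y \<in> rl_geq2 \<and> f y \<in> J y"
  then have f_gen: "rl_deriv_ext f (rl_gen y) = f y" for y by (simp add: rl_deriv_ext_simps)
  show "\<exists>!d. rl_derivation d \<and> (\<forall>y. d (rl_gen y) = f y)"
  proof (rule ex1I[of _ "rl_deriv_ext f"])
    show "rl_derivation (rl_deriv_ext f) \<and> (\<forall>y. rl_deriv_ext f (rl_gen y) = f y)"
      using rl_derivation_rl_deriv_ext[OF f] f_gen by blast
  next
    fix d
    assume "rl_derivation d \<and> (\<forall>y. d (rl_gen y) = f y)"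
    then show "d = rl_deriv_ext f"
      by (auto intro!: rl_derivation_eqI rl_derivation_rl_deriv_ext[OF f] simp: f_gen)
  qed
qed

end
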